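(* For every integer $d \geq 2$, the morphism $(\mathbb{C}^* )^2 \to \mathbb{C}^3$, $(x,y) \mapsto (x^{-1} + d y^{-1},\ x + dy,\ x^2 + dy^2)$ is injective. *)

theory Defs
  imports Complex_Main
begin

end

theory Submission
  imports Defs
begin

text \<open>Suppose two points (x, y), (x', y') of the torus have the same image and put
  v = y - y'. The linear coordinates give x - x' = -D v. If v \<noteq> 0, the quadratic
  coordinates then force x + x' = y + y' and the reciprocal coordinates force
  x x' = y y', so {x, x'} = {y, y'}. Either matching gives (D + 1) v = 0 or
  (D - 1) v = 0, impossible for D \<notin> {0, 1, -1}.\<close>

lemma sum_prod_eq_imp_eq_or_swap:
  fixes a b c d :: "'a::idom"
  assumes sum: "a + b = c + d" and prod: "a * b = c * d"
  shows "a = c \<and> b = d \<or> a = d \<and> b = c"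
proof -
  have "(a - c) * (a - d) = a * a - a * (c + d) + c * d"
    by (simp add: algebra_simps)
  also have "\<dots> = 0"
    unfolding sum[symmetric] prod[symmetric] by (simp add: algebra_simps)
  finally have "a = c \<or> a = d" by simp
  then show ?thesis using sum by auto
qed

lemma torus_map_eq_imp_eq:
  fixes x y x' y' D :: "'a::field"
  assumes nz: "x \<noteq> 0" "y \<noteq> 0" "x' \<noteq> 0" "y' \<noteq> 0"
    and D: "D \<noteq> 0" "D \<noteq> 1" "D \<noteq> -1"
    and inv: "inverse x + D * inverse y = inverse x' + D * inverse y'"
    and lin: "x + D * y = x' + D * y'"
    and sq: "x^2 + D * y^2 = x'^2 + D * y'^2"
  shows "x = x' \<and> y = y'"
proof (rule ccontr)
  assume "\<not> (x = x' \<and> y = y')"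
  define v where "v = y - y'"
  have u: "x - x' = - D * v"
    using lin unfolding v_def by (simp add: algebra_simps)
  with \<open>\<not> (x = x' \<and> y = y')\<close> have v: "v \<noteq> 0"
    unfolding v_def by auto
  have "(x - x') * (x + x') + D * v * (y + y') = 0"
    using sq unfolding v_def by (simp add: algebra_simps power2_eq_square)
  then have "D * v * ((y + y') - (x + x')) = 0"
    unfolding u by (simp add: algebra_simps)
  then have sum: "x + x' = y + y'"
    using v D by simp
  have diffs: "x' - x = D * v" "y' - y = - v"
    using u unfolding v_def by (simp_all add: algebra_simps)
  have "D * v * (y * y' - x * x') = (x' - x) * (y * y') + D * (y' - y) * (x * x')"
    by (simp only: diffs) (simp add: algebra_simps)
  also have "\<dots> = 0"
    using inv nz by (simp add: field_simps)
  finally have "D * v * (y * y' - x * x') = 0" .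
  then have prod: "x * x' = y * y'"
    using v D by simp
  from sum_prod_eq_imp_eq_or_swap[OF sum prod] show False
  proof
    assume "x = y \<and> x' = y'"
    with u have "(D + 1) * v = 0"
      unfolding v_def by (simp add: algebra_simps)
    with v D show False
      by (metis add_eq_0_iff2 mult_eq_0_iff)
  next
    assume "x = y' \<and> x' = y"
    with u have "(D - 1) * v = 0"
      unfolding v_def by (simp add: algebra_simps)
    with v D show False by simp
  qed
qed

lemma inj_on_torus_map:
  fixes D :: "'a::field"
  assumes "D \<noteq> 0" "D \<noteq> 1" "D \<noteq> -1"
  shows "inj_on (\<lambda>(x, y). (inverse x + D * inverse y, x + D * y, x^2 + D * y^2))
           {(x, y). x \<noteq> 0 \<and> y \<noteq> 0}"
  unfolding inj_on_def
proof (clarify)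
  fix x y x' y' :: 'a
  assume "x \<noteq> 0" "y \<noteq> 0" "x' \<noteq> 0" "y' \<noteq> 0"
    and "inverse x + D * inverse y = inverse x' + D * inverse y'"
    and "x + D * y = x' + D * y'" and "x^2 + D * y^2 = x'^2 + D * y'^2"
  with assms show "x = x' \<and> y = y'"
    by (intro torus_map_eq_imp_eq)
qed

theorem lemma4p4:
  fixes d :: int
  assumes "d \<ge> 2"
  shows "inj_on (\<lambda>(x::complex, y::complex).
            (inverse x + of_int d * inverse y, x + of_int d * y, x^2 + of_int d * y^2))
          {(x, y). x \<noteq> 0 \<and> y \<noteq> 0}"
proof (rule inj_on_torus_map)
  have "d \<noteq> 0" "d \<noteq> 1" "d \<noteq> -1"
    using assms by simp_all
  then show "(of_int d :: complex) \<noteq> 0" "(of_int d :: complex) \<noteq> 1"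
    "(of_int d :: complex) \<noteq> -1"
    by (simp_all, metis of_int_1 of_int_eq_iff of_int_minus)
qed

end
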